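(* Let $\mathcal{G}=(\mathcal{V},\mathcal{E})$ be a symmetric connected graph with $N$ nodes and spectral gap $\lambda_1$, let $q\in(0,1)$, and run the BGA on $\mathcal{G}$ with mixing parameter $q$ from an initial condition $x(0)\in[0,L]^{\mathcal{V}}$. Then there exists a constant $C>0$ (depending on the initial condition $x(0)$) such that $$\mathbb{E}[\beta(\infty)]\le C\,\frac{q}{1-q}\,\frac{\deg_{\max}^2}{N\lambda_1},$$ where $\beta(t)=|x_{\mathrm{ave}}(t)-x_{\mathrm{ave}}(0)|^2$ and $\mathbb{E}[\beta(\infty)]:=\lim_{t\to\infty}\mathbb{E}[\beta(t)]$.
   Context: Graph and neighborhoods: $\mathcal{G}=(\mathcal{V},\mathcal{E})$ with $\mathcal{E}\subset\mathcal{V}\times\mathcal{V}$ and $N=|\mathcal{V}|$. For $v\in\mathcal{V}$, the out-neighborhood is $\mathcal{N}^+_v=\{u\in\mathcal{V}:(u,v)\in\mathcal{E}\}$ and the in-neighborhood is $\mathcal{N}^-_v=\{u\in\mathcal{V}:(v,u)\in\mathcal{E}\}$; $\deg^\pm_v=|\mathcal{N}^\pm_v|$, $\deg^\pm_{\max}=\max_v\deg^\pm_v$, $\deg_{\max}=\max\{\deg^-_{\max},\deg^+_{\max}\}$. The graph is symmetric if $\mathcal{N}^+_v=\mathcal{N}^-_v$ for all $v$. The spectral gap $\lambda_1$ is the smallest nonzero eigenvalue (in modulus) of the Laplacian matrix of $\mathcal{G}$. BGA: given initial values $x_v(0)\in[0,L]$ and a mixing parameter $q\in(0,1)$, at each time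 $t\in\mathbb{Z}_{\ge0}$ one node $v$ is sampled uniformly at random from $\mathcal{V}$ (independently over time); every $u\in\mathcal{N}^+_v$ updates $x_u(t+1)=(1-q)x_u(t)+q\,x_v(t)$, and every $u\notin\mathcal{N}^+_v$ keeps $x_u(t+1)=x_u(t)$. Notation: $x_{\mathrm{ave}}(t)=N^{-1}\sum_v x_v(t)$. *)

theory Defs
  imports "HOL-Probability.Probability"
begin

text \<open>Graphs: vertex set = the finite type 'v, edges E :: ('v \<times> 'v) set.\<close>

definition out_nbhd :: "('v \<times> 'v) set \<Rightarrow> 'v \<Rightarrow> 'v set" where
  "out_nbhd E v = {u. (u, v) \<in> E}"

definition in_nbhd :: "('v \<times> 'v) set \<Rightarrow> 'v \<Rightarrow> 'v set" where
  "in_nbhd E v = {u. (v, u) \<in> E}"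

definition deg_max :: "('v::finite \<times> 'v) set \<Rightarrow> nat" where
  "deg_max E = max (Max (range (\<lambda>v. card (in_nbhd E v)))) (Max (range (\<lambda>v. card (out_nbhd E v))))"

definition symmetric_graph :: "('v \<times> 'v) set \<Rightarrow> bool" where
  "symmetric_graph E \<longleftrightarrow> (\<forall>v. out_nbhd E v = in_nbhd E v)"

definition connected_graph :: "('v \<times> 'v) set \<Rightarrow> bool" where
  "connected_graph E \<longleftrightarrow> (\<forall>u v. (u, v) \<in> E\<^sup>*)"

definition laplacian :: "('v::finite \<times> 'v) set \<Rightarrow> real^'v^'v" where
  "laplacian E = (\<chi> i j. (if i = j then real (card (out_nbhd E i)) else 0)
                         - (if (i, j) \<in> E then 1 else 0))"

definition lap_eigenvalue :: "('v::finite \<times> 'v) set \<Rightarrow> real \<Rightarrow> bool" where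
  "lap_eigenvalue E \<mu> \<longleftrightarrow> (\<exists>x. x \<noteq> 0 \<and> laplacian E *v x = \<mu> *\<^sub>R x)"

definition spectral_gap :: "('v::finite \<times> 'v) set \<Rightarrow> real" where
  "spectral_gap E = Min {\<bar>\<mu>\<bar> | \<mu>. lap_eigenvalue E \<mu> \<and> \<mu> \<noteq> 0}"

definition bga_step :: "('v \<times> 'v) set \<Rightarrow> real \<Rightarrow> ('v \<Rightarrow> real) \<Rightarrow> 'v \<Rightarrow> ('v \<Rightarrow> real)" where
  "bga_step E q x v = (\<lambda>u. if u \<in> out_nbhd E v then (1 - q) * x u + q * x v else x u)"

primrec bga_dist :: "('v::finite \<times> 'v) set \<Rightarrow> real \<Rightarrow> ('v \<Rightarrow> real) \<Rightarrow> nat \<Rightarrow> ('v \<Rightarrow> real) pmf" where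
  "bga_dist E q x0 0 = return_pmf x0"
| "bga_dist E q x0 (Suc t) =
     bind_pmf (bga_dist E q x0 t) (\<lambda>x. map_pmf (bga_step E q x) (pmf_of_set UNIV))"

definition x_ave :: "('v::finite \<Rightarrow> real) \<Rightarrow> real" where
  "x_ave x = (\<Sum>v\<in>UNIV. x v) / real CARD('v)"

definition expected_beta :: "('v::finite \<times> 'v) set \<Rightarrow> real \<Rightarrow> ('v \<Rightarrow> real) \<Rightarrow> nat \<Rightarrow> real" where
  "expected_beta E q x0 t =
     measure_pmf.expectation (bga_dist E q x0 t) (\<lambda>x. \<bar>x_ave x - x_ave x0\<bar>\<^sup>2)"

end

theory Submission
  imports Defs
begin

(* Let W(x) = sum_v x_v^2 and let S(x) = sum over edges (u,v) of (x_v - x_u)^2 be the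
   Dirichlet energy.  When node v is sampled, the network sum grows by q * g_v(x), where
   g_v(x) = sum_{u in N+_v} (x_v - x_u).  On a symmetric graph the g_v sum to zero, so
   averaging over v the squared deviation beta of the average grows by
   q^2/N^3 * sum_v g_v^2 <= q^2 D/N^3 * S, while W shrinks by q(1-q)/N * S.  Hence
   E[beta(t)] is increasing and E[beta(t)] + K E[W(t)] is nonincreasing for
   K = q D / ((1-q) N^2), which yields a limit E[beta(oo)] <= K W(x(0)).

   To compare with the stated bound we show, using only the symmetry of the Laplacian,
   that its spectrum is finite, all eigenvalues are bounded by 2 D (a Gershgorin estimate),
   and a positive eigenvalue exists as soon as the graph has an edge between distinct
   nodes (via the maximum of the Rayleigh quotient).  So 0 < lambda_1 <= 2 D, and the
   theorem follows with C = 2 W(x(0)) + 1. *)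

section \<open>The BGA as a Markov chain: one-step expectations\<close>

lemma finite_set_bga_dist: "finite (set_pmf (bga_dist E q x0 t))"
  by (induction t) (auto simp: set_bind_pmf)

lemma integrable_bga_dist: "integrable (measure_pmf (bga_dist E q x0 t)) (f :: _ \<Rightarrow> real)"
  by (rule integrable_measure_pmf_finite[OF finite_set_bga_dist])

lemma expectation_bga_dist_Suc:
  fixes h :: "('v::finite \<Rightarrow> real) \<Rightarrow> real"
  shows "measure_pmf.expectation (bga_dist E q x0 (Suc t)) h =
     measure_pmf.expectation (bga_dist E q x0 t)
       (\<lambda>x. (\<Sum>v\<in>UNIV. h (bga_step E q x v)) / real CARD('v))"
proof -
  let ?p = "bga_dist E q x0 t"
  have "measure_pmf.expectation (bga_dist E q x0 (Suc t)) h =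
      (\<Sum>a\<in>set_pmf ?p. pmf ?p a *\<^sub>R
         measure_pmf.expectation (map_pmf (bga_step E q a) (pmf_of_set UNIV)) h)"
    unfolding bga_dist.simps by (rule pmf_expectation_bind[OF finite_set_bga_dist]) auto
  also have "\<dots> = (\<Sum>a\<in>set_pmf ?p. pmf ?p a *\<^sub>R
                    ((\<Sum>v\<in>UNIV. h (bga_step E q a v)) / real CARD('v)))"
    by (simp add: integral_pmf_of_set)
  also have "\<dots> = measure_pmf.expectation ?p
                    (\<lambda>x. (\<Sum>v\<in>UNIV. h (bga_step E q x v)) / real CARD('v))"
    by (rule integral_measure_pmf[symmetric, OF finite_set_bga_dist]) auto
  finally show ?thesis .
qed

section \<open>Deterministic effect of a single broadcast\<close>

definition broadcast_gain :: "('v::finite \<times> 'v) set \<Rightarrow> ('v \<Rightarrow> real) \<Rightarrow> 'v \<Rightarrow> real" where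
  "broadcast_gain E x v = (\<Sum>u\<in>out_nbhd E v. x v - x u)"

definition sq_norm :: "('v::finite \<Rightarrow> real) \<Rightarrow> real" where
  "sq_norm x = (\<Sum>u\<in>UNIV. (x u)\<^sup>2)"

definition dirichlet_energy :: "('v::finite \<times> 'v) set \<Rightarrow> ('v \<Rightarrow> real) \<Rightarrow> real" where
  "dirichlet_energy E x = (\<Sum>v\<in>UNIV. \<Sum>u\<in>out_nbhd E v. (x v - x u)\<^sup>2)"

lemma symmetric_graph_edge_iff: "symmetric_graph E \<Longrightarrow> (u, v) \<in> E \<longleftrightarrow> (v, u) \<in> E"
  unfolding symmetric_graph_def out_nbhd_def in_nbhd_def by (metis mem_Collect_eq)

lemma card_out_nbhd_le_deg_max: "card (out_nbhd E v) \<le> deg_max (E :: ('v::finite \<times> 'v) set)"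
  unfolding deg_max_def by (rule le_trans[OF Max_ge max.cobounded2]) auto

lemma card_in_nbhd_le_deg_max: "card (in_nbhd E v) \<le> deg_max (E :: ('v::finite \<times> 'v) set)"
  unfolding deg_max_def by (rule le_trans[OF Max_ge max.cobounded1]) auto

lemma sum_out_nbhd_swap:
  fixes E :: "('v::finite \<times> 'v) set" and f :: "'v \<Rightarrow> 'v \<Rightarrow> real"
  assumes "symmetric_graph E"
  shows "(\<Sum>v\<in>UNIV. \<Sum>u\<in>out_nbhd E v. f v u) = (\<Sum>v\<in>UNIV. \<Sum>u\<in>out_nbhd E v. f u v)"
proof -
  have flat: "(\<Sum>v\<in>UNIV. \<Sum>u\<in>out_nbhd E v. g v u) =
      (\<Sum>v\<in>UNIV. \<Sum>u\<in>UNIV. if (u, v) \<in> E then g v u else 0)" for g :: "'v \<Rightarrow> 'v \<Rightarrow> real"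
    unfolding out_nbhd_def by (simp add: sum.inter_filter[symmetric])
  have "(\<Sum>v\<in>UNIV. \<Sum>u\<in>UNIV. if (u, v) \<in> E then f v u else 0) =
        (\<Sum>u\<in>UNIV. \<Sum>v\<in>UNIV. if (u, v) \<in> E then f v u else 0)"
    by (rule sum.swap)
  also have "\<dots> = (\<Sum>u\<in>UNIV. \<Sum>v\<in>UNIV. if (v, u) \<in> E then f v u else 0)"
    using symmetric_graph_edge_iff[OF assms] by (intro sum.cong refl) auto
  finally show ?thesis unfolding flat .
qed

lemma sum_broadcast_gain_zero:
  assumes "symmetric_graph E"
  shows "(\<Sum>v\<in>UNIV. broadcast_gain E x v) = 0"
proof -
  let ?T = "\<Sum>v\<in>UNIV. \<Sum>u\<in>out_nbhd E v. x v - x u"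
  have "?T = (\<Sum>v\<in>UNIV. \<Sum>u\<in>out_nbhd E v. x u - x v)"
    by (rule sum_out_nbhd_swap[OF assms])
  also have "\<dots> = - ?T" by (simp add: sum_negf[symmetric])
  finally show ?thesis unfolding broadcast_gain_def by simp
qed

lemma x_ave_bga_step:
  fixes x :: "'v::finite \<Rightarrow> real"
  shows "x_ave (bga_step E q x v) = x_ave x + q * broadcast_gain E x v / real CARD('v)"
proof -
  have "(\<Sum>u\<in>UNIV. bga_step E q x v u) =
        (\<Sum>u\<in>UNIV. x u + q * (if u \<in> out_nbhd E v then x v - x u else 0))"
    by (rule sum.cong) (auto simp: bga_step_def algebra_simps)
  also have "\<dots> = (\<Sum>u\<in>UNIV. x u) + q * broadcast_gain E x v"
    by (simp add: broadcast_gain_def sum.distrib sum_distrib_left[symmetric]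
        sum.inter_restrict[symmetric])
  finally show ?thesis unfolding x_ave_def by (simp add: add_divide_distrib)
qed

text \<open>Cauchy-Schwarz: the squared gain is controlled by the local energy and the degree.\<close>

lemma broadcast_gain_sq_le:
  fixes E :: "('v::finite \<times> 'v) set"
  shows "(broadcast_gain E x v)\<^sup>2 \<le> real (deg_max E) * (\<Sum>u\<in>out_nbhd E v. (x v - x u)\<^sup>2)"
proof -
  have "(broadcast_gain E x v)\<^sup>2 \<le> (\<Sum>u\<in>out_nbhd E v. (x v - x u)\<^sup>2) * card (out_nbhd E v)"
    unfolding broadcast_gain_def by (rule sum_squared_le_sum_of_squares)
  also have "\<dots> \<le> (\<Sum>u\<in>out_nbhd E v. (x v - x u)\<^sup>2) * deg_max E"
    using card_out_nbhd_le_deg_max[of E v] by (intro mult_left_mono) (auto intro: sum_nonneg)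
  finally show ?thesis by (simp add: mult.commute)
qed

lemma sum_broadcast_gain_sq_le:
  fixes E :: "('v::finite \<times> 'v) set"
  shows "(\<Sum>v\<in>UNIV. (broadcast_gain E x v)\<^sup>2) \<le> real (deg_max E) * dirichlet_energy E x"
proof -
  have "(\<Sum>v\<in>UNIV. (broadcast_gain E x v)\<^sup>2) \<le>
        (\<Sum>v\<in>UNIV. real (deg_max E) * (\<Sum>u\<in>out_nbhd E v. (x v - x u)\<^sup>2))"
    by (intro sum_mono broadcast_gain_sq_le)
  then show ?thesis by (simp add: dirichlet_energy_def sum_distrib_left)
qed

text \<open>Averaged over the broadcasting node, the deviation of the average grows by the mean
  squared gain; the cross term vanishes because the gains sum to zero.\<close>

lemma mean_sq_deviation_bga_step:
  fixes x :: "'v::finite \<Rightarrow> real"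
  assumes "symmetric_graph E"
  shows "(\<Sum>v\<in>UNIV. (x_ave (bga_step E q x v) - c)\<^sup>2) / real CARD('v)
     = (x_ave x - c)\<^sup>2 + q\<^sup>2 * (\<Sum>v\<in>UNIV. (broadcast_gain E x v)\<^sup>2) / real CARD('v) ^ 3"
proof -
  let ?N = "real CARD('v)" and ?g = "broadcast_gain E x"
  have "(\<Sum>v\<in>UNIV. (x_ave (bga_step E q x v) - c)\<^sup>2) =
     (\<Sum>v\<in>UNIV. (x_ave x - c)\<^sup>2 + (2 * (x_ave x - c) * q / ?N) * ?g v + q\<^sup>2 / ?N\<^sup>2 * (?g v)\<^sup>2)"
    unfolding x_ave_bga_step by (intro sum.cong refl) (simp add: power2_eq_square field_simps)
  also have "\<dots> = ?N * (x_ave x - c)\<^sup>2 + (2 * (x_ave x - c) * q / ?N) * (\<Sum>v\<in>UNIV. ?g v)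
                    + q\<^sup>2 / ?N\<^sup>2 * (\<Sum>v\<in>UNIV. (?g v)\<^sup>2)"
    by (simp add: sum.distrib sum_distrib_left)
  finally show ?thesis
    using sum_broadcast_gain_zero[OF assms] by (simp add: field_simps power3_eq_cube power2_eq_square)
qed

lemma sum_sq_norm_bga_step:
  fixes x :: "'v::finite \<Rightarrow> real"
  assumes "symmetric_graph E"
  shows "(\<Sum>v\<in>UNIV. sq_norm (bga_step E q x v))
           = real CARD('v) * sq_norm x - q * (1 - q) * dirichlet_energy E x"
proof -
  let ?P = "\<Sum>v\<in>UNIV. \<Sum>u\<in>out_nbhd E v. x u * (x v - x u)"
  have "?P = (\<Sum>v\<in>UNIV. \<Sum>u\<in>out_nbhd E v. x v * (x u - x v))"
    by (rule sum_out_nbhd_swap[OF assms])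
  then have "2 * ?P = (\<Sum>v\<in>UNIV. \<Sum>u\<in>out_nbhd E v. x u * (x v - x u) + x v * (x u - x v))"
    by (simp add: sum.distrib)
  also have "\<dots> = - dirichlet_energy E x"
    by (simp add: dirichlet_energy_def sum_negf[symmetric] power2_eq_square algebra_simps)
  finally have cross: "2 * ?P = - dirichlet_energy E x" .
  have "(\<Sum>v\<in>UNIV. sq_norm (bga_step E q x v)) =
      (\<Sum>v\<in>UNIV. \<Sum>u\<in>UNIV. (x u)\<^sup>2 + (if u \<in> out_nbhd E v
          then 2 * q * (x u * (x v - x u)) + q\<^sup>2 * (x v - x u)\<^sup>2 else 0))"
    unfolding sq_norm_def
    by (intro sum.cong refl) (auto simp: bga_step_def power2_eq_square algebra_simps)
  also have "\<dots> = real CARD('v) * sq_norm x + 2 * q * ?P + q\<^sup>2 * dirichlet_energy E x"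
    by (simp add: sum.distrib sum_distrib_left sq_norm_def dirichlet_energy_def
        sum.inter_filter[symmetric] out_nbhd_def)
  also have "\<dots> = real CARD('v) * sq_norm x - q * (1 - q) * dirichlet_energy E x"
    using cross by (simp add: algebra_simps power2_eq_square)
  finally show ?thesis .
qed

section \<open>Evolution of the expectations\<close>

lemma expected_beta_Suc:
  fixes x0 :: "'v::finite \<Rightarrow> real"
  assumes "symmetric_graph E"
  shows "expected_beta E q x0 (Suc t) = expected_beta E q x0 t +
     q\<^sup>2 / real CARD('v) ^ 3 *
       measure_pmf.expectation (bga_dist E q x0 t) (\<lambda>x. \<Sum>v\<in>UNIV. (broadcast_gain E x v)\<^sup>2)"
proof -
  let ?p = "bga_dist E q x0 t" and ?G = "\<lambda>x. \<Sum>v\<in>UNIV. (broadcast_gain E x v)\<^sup>2"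
  have "expected_beta E q x0 (Suc t) = measure_pmf.expectation ?p
          (\<lambda>x. (x_ave x - x_ave x0)\<^sup>2 + q\<^sup>2 / real CARD('v) ^ 3 * ?G x)"
    unfolding expected_beta_def expectation_bga_dist_Suc power2_abs
    by (simp add: mean_sq_deviation_bga_step[OF assms])
  also have "\<dots> = expected_beta E q x0 t + q\<^sup>2 / real CARD('v) ^ 3 * measure_pmf.expectation ?p ?G"
    unfolding expected_beta_def power2_abs
    by (subst Bochner_Integration.integral_add) (auto intro: integrable_bga_dist)
  finally show ?thesis .
qed

lemma expected_sq_norm_Suc:
  fixes x0 :: "'v::finite \<Rightarrow> real"
  assumes "symmetric_graph E"
  shows "measure_pmf.expectation (bga_dist E q x0 (Suc t)) sq_norm =
     measure_pmf.expectation (bga_dist E q x0 t) sq_norm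
       - q * (1 - q) / real CARD('v) * measure_pmf.expectation (bga_dist E q x0 t) (dirichlet_energy E)"
proof -
  let ?p = "bga_dist E q x0 t"
  have "measure_pmf.expectation (bga_dist E q x0 (Suc t)) sq_norm = measure_pmf.expectation ?p
          (\<lambda>x. sq_norm x - q * (1 - q) / real CARD('v) * dirichlet_energy E x)"
    unfolding expectation_bga_dist_Suc sum_sq_norm_bga_step[OF assms] by (simp add: field_simps)
  also have "\<dots> = measure_pmf.expectation ?p sq_norm
       - q * (1 - q) / real CARD('v) * measure_pmf.expectation ?p (dirichlet_energy E)"
    by (subst Bochner_Integration.integral_diff) (auto intro: integrable_bga_dist)
  finally show ?thesis .
qed

lemma incseq_lyapunov_limit:
  fixes B W :: "nat \<Rightarrow> real"
  assumes inc: "incseq B"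
    and dec: "\<And>t. B (Suc t) + K * W (Suc t) \<le> B t + K * W t"
    and nonneg: "\<And>t. 0 \<le> K * W t"
  shows "\<exists>l. B \<longlonglongrightarrow> l \<and> l \<le> B 0 + K * W 0"
proof -
  have descent: "B t + K * W t \<le> B 0 + K * W 0" for t
    by (induction t) (use dec order_trans in auto)
  have bound: "B t \<le> B 0 + K * W 0" for t
    using descent[of t] nonneg[of t] by linarith
  have "B \<longlonglongrightarrow> (SUP t. B t)"
    by (rule LIMSEQ_incseq_SUP[OF _ inc]) (use bound in \<open>auto intro: bdd_aboveI[of _ "B 0 + K * W 0"]\<close>)
  moreover have "(SUP t. B t) \<le> B 0 + K * W 0"
    by (rule cSUP_least) (auto intro: bound)
  ultimately show ?thesis by blast
qed

lemma expected_beta_limit: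
  fixes x0 :: "'v::finite \<Rightarrow> real" and E :: "('v \<times> 'v) set"
  assumes sym: "symmetric_graph E" and q: "0 < q" "q < 1"
  shows "\<exists>l. expected_beta E q x0 \<longlonglongrightarrow> l \<and>
     l \<le> q * real (deg_max E) * sq_norm x0 / ((1 - q) * (real CARD('v))\<^sup>2)"
proof -
  let ?N = "real CARD('v)" and ?D = "real (deg_max E)"
  let ?E = "\<lambda>t. measure_pmf.expectation (bga_dist E q x0 t)"
  define K where "K = q * ?D / ((1 - q) * ?N\<^sup>2)"
  have K: "0 \<le> K" unfolding K_def using q by simp
  have growth: "?E t (\<lambda>x. \<Sum>v\<in>UNIV. (broadcast_gain E x v)\<^sup>2) \<le> ?D * ?E t (dirichlet_energy E)" for t
    using integral_mono[OF integrable_bga_dist integrable_bga_dist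
        sum_broadcast_gain_sq_le[of E]]
    by simp
  have inc: "incseq (expected_beta E q x0)"
    by (rule incseq_SucI)
      (simp add: expected_beta_Suc[OF sym] integral_nonneg_AE sum_nonneg)
  have dec: "expected_beta E q x0 (Suc t) + K * ?E (Suc t) sq_norm
                 \<le> expected_beta E q x0 t + K * ?E t sq_norm" for t
  proof -
    have "q\<^sup>2 / ?N ^ 3 * (?D * ?E t (dirichlet_energy E))
          = K * (q * (1 - q) / ?N * ?E t (dirichlet_energy E))"
      unfolding K_def using q by (simp add: field_simps power2_eq_square power3_eq_cube)
    moreover have "q\<^sup>2 / ?N ^ 3 * ?E t (\<lambda>x. \<Sum>v\<in>UNIV. (broadcast_gain E x v)\<^sup>2)
                   \<le> q\<^sup>2 / ?N ^ 3 * (?D * ?E t (dirichlet_energy E))"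
      using growth by (intro mult_left_mono) auto
    ultimately show ?thesis
      unfolding expected_beta_Suc[OF sym] expected_sq_norm_Suc[OF sym] by (simp add: algebra_simps)
  qed
  have nonneg: "0 \<le> K * ?E t sq_norm" for t
    using K by (simp add: sq_norm_def integral_nonneg_AE sum_nonneg)
  obtain l where "expected_beta E q x0 \<longlonglongrightarrow> l"
      "l \<le> expected_beta E q x0 0 + K * ?E 0 sq_norm"
    using incseq_lyapunov_limit[OF inc dec nonneg] by blast
  then show ?thesis
    by (intro exI[of _ l]) (simp add: expected_beta_def K_def mult.commute mult.left_commute)
qed

section \<open>Eigenvalues of real symmetric matrices\<close>

lemma symmetric_matrix_inner:
  fixes A :: "real^'n^'n"
  assumes "transpose A = A"
  shows "(A *v x) \<bullet> y = x \<bullet> (A *v y)"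
  by (metis assms dot_lmul_matrix vector_transpose_matrix)

text \<open>Eigenvectors for distinct eigenvalues are orthogonal, hence independent, so a
  symmetric matrix has only finitely many eigenvalues.\<close>

lemma finite_eigenvalues_symmetric:
  fixes A :: "real^'n^'n"
  assumes sym: "transpose A = A"
  shows "finite {\<mu>. \<exists>x. x \<noteq> 0 \<and> A *v x = \<mu> *\<^sub>R x}"
proof -
  let ?F = "{\<mu>. \<exists>x. x \<noteq> 0 \<and> A *v x = \<mu> *\<^sub>R x}"
  define ev where "ev \<mu> = (SOME x. x \<noteq> 0 \<and> A *v x = \<mu> *\<^sub>R x)" for \<mu>
  have ev: "ev \<mu> \<noteq> 0 \<and> A *v ev \<mu> = \<mu> *\<^sub>R ev \<mu>" if "\<mu> \<in> ?F" for \<mu>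
    using that unfolding ev_def mem_Collect_eq by (rule someI_ex)
  have orth: "ev \<mu> \<bullet> ev \<nu> = 0" if "\<mu> \<in> ?F" "\<nu> \<in> ?F" "\<mu> \<noteq> \<nu>" for \<mu> \<nu>
  proof -
    have "\<mu> * (ev \<mu> \<bullet> ev \<nu>) = (A *v ev \<mu>) \<bullet> ev \<nu>" using ev[OF that(1)] by simp
    also have "\<dots> = ev \<mu> \<bullet> (A *v ev \<nu>)" by (rule symmetric_matrix_inner[OF sym])
    also have "\<dots> = \<nu> * (ev \<mu> \<bullet> ev \<nu>)" using ev[OF that(2)] by simp
    finally show ?thesis using that(3) by simp
  qed
  have inj: "inj_on ev ?F"
  proof (rule inj_onI)
    fix \<mu> \<nu> assume a: "\<mu> \<in> ?F" "\<nu> \<in> ?F" "ev \<mu> = ev \<nu>"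
    show "\<mu> = \<nu>"
    proof (rule ccontr)
      assume "\<mu> \<noteq> \<nu>"
      then have "ev \<mu> \<bullet> ev \<mu> = 0" using orth[OF a(1,2)] a(3) by simp
      then show False using ev[OF a(1)] by simp
    qed
  qed
  have "pairwise orthogonal (ev ` ?F)"
    unfolding pairwise_def orthogonal_def using orth by blast
  moreover have "0 \<notin> ev ` ?F" using ev by (metis (no_types, lifting) imageE)
  ultimately have "independent (ev ` ?F)" by (rule pairwise_orthogonal_independent)
  then have "finite (ev ` ?F)" by (rule independent_imp_finite)
  then show ?thesis using inj by (rule finite_imageD)
qed

text \<open>If M bounds the Rayleigh quotient of a symmetric matrix and the bound is attained at x,
  then x is an eigenvector for M: moving x in the direction w = M x - A x would otherwise
  increase the quotient beyond M.\<close>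

lemma rayleigh_maximiser_eigenvector:
  fixes A :: "real^'n^'n"
  assumes sym: "transpose A = A"
    and bound: "\<And>y. y \<bullet> (A *v y) \<le> M * (y \<bullet> y)"
    and attained: "x \<bullet> (A *v x) = M * (x \<bullet> x)"
  shows "A *v x = M *\<^sub>R x"
proof -
  define w where "w = M *\<^sub>R x - A *v x"
  have w_Ax: "w \<bullet> (A *v x) = M * (x \<bullet> w) - w \<bullet> w"
    unfolding w_def by (simp add: inner_diff_left inner_diff_right inner_commute algebra_simps)
  define c where "c = M * (w \<bullet> w) - w \<bullet> (A *v w)"
  have c: "c \<ge> 0" unfolding c_def using bound[of w] by simp
  have step: "2 * s * (w \<bullet> w) \<le> s\<^sup>2 * c" for s
  proof -
    have "x \<bullet> (A *v w) = w \<bullet> (A *v x)"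
      using symmetric_matrix_inner[OF sym, of w x] by (simp add: inner_commute)
    then have "(x - s *\<^sub>R w) \<bullet> (A *v (x - s *\<^sub>R w))
        = x \<bullet> (A *v x) - 2 * s * (w \<bullet> (A *v x)) + s\<^sup>2 * (w \<bullet> (A *v w))"
      by (simp add: matrix_vector_mult_diff_distrib matrix_vector_mult_scaleR inner_diff_left
          inner_diff_right power2_eq_square algebra_simps)
    moreover have "(x - s *\<^sub>R w) \<bullet> (x - s *\<^sub>R w) = x \<bullet> x - 2 * s * (x \<bullet> w) + s\<^sup>2 * (w \<bullet> w)"
      by (simp add: inner_diff_left inner_diff_right inner_commute power2_eq_square algebra_simps)
    ultimately have "x \<bullet> (A *v x) - 2 * s * (w \<bullet> (A *v x)) + s\<^sup>2 * (w \<bullet> (A *v w))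
        \<le> M * (x \<bullet> x - 2 * s * (x \<bullet> w) + s\<^sup>2 * (w \<bullet> w))"
      using bound[of "x - s *\<^sub>R w"] by simp
    then show ?thesis unfolding attained w_Ax c_def by (simp add: algebra_simps)
  qed
  have "w = 0"
  proof (rule ccontr)
    assume "w \<noteq> 0"
    then have ww: "w \<bullet> w > 0" by simp
    define s where "s = (w \<bullet> w) / (c + 1)"
    have s: "s > 0" unfolding s_def using ww c by simp
    have "2 * (w \<bullet> w) \<le> s * c" using step[of s] s by (simp add: power2_eq_square)
    also have "s * c = (w \<bullet> w) * (c / (c + 1))" unfolding s_def by simp
    also have "\<dots> \<le> (w \<bullet> w) * 1" using ww c by (intro mult_left_mono) auto
    finally show False using ww by simp
  qed
  then show ?thesis unfolding w_def by simp
qed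

text \<open>A symmetric matrix whose quadratic form is positive somewhere has a positive
  eigenvalue, namely the maximum of its quadratic form on the unit sphere.\<close>

lemma symmetric_positive_eigenvalue:
  fixes A :: "real^'n^'n"
  assumes sym: "transpose A = A" and pos: "z \<bullet> (A *v z) > 0"
  shows "\<exists>M>0. \<exists>x. x \<noteq> 0 \<and> A *v x = M *\<^sub>R x"
proof -
  define f where "f y = y \<bullet> (A *v y)" for y
  have "continuous_on (sphere 0 1) f" unfolding f_def
    by (intro continuous_intros linear_continuous_on matrix_vector_mul_bounded_linear)
  moreover have "axis undefined 1 \<in> sphere (0::real^'n) 1" by simp
  ultimately obtain x where x: "x \<in> sphere 0 1" "\<And>y. y \<in> sphere 0 1 \<Longrightarrow> f y \<le> f x"
    using continuous_attains_sup[OF compact_sphere] by blast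
  have scale: "f (c *\<^sub>R y) = c\<^sup>2 * f y" for c y
    unfolding f_def by (simp add: matrix_vector_mult_scaleR power2_eq_square)
  have bound: "f y \<le> f x * (y \<bullet> y)" for y
  proof (cases "y = 0")
    case True then show ?thesis by (simp add: f_def)
  next
    case False
    then have "f ((1 / norm y) *\<^sub>R y) \<le> f x" by (intro x(2)) simp
    then have "(norm y)\<^sup>2 * f ((1 / norm y) *\<^sub>R y) \<le> (norm y)\<^sup>2 * f x" by (simp add: mult_left_mono)
    then show ?thesis using False by (simp add: scale power_divide power2_norm_eq_inner mult.commute)
  qed
  have "x \<bullet> x = 1" using x(1) by (simp add: power2_norm_eq_inner[symmetric])
  then have eig: "A *v x = f x *\<^sub>R x"
    using rayleigh_maximiser_eigenvector[OF sym, of "f x" x] bound unfolding f_def by simp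
  have "z \<noteq> 0" using pos by auto
  then have "0 < f z" "z \<bullet> z > 0" using pos by (simp_all add: f_def)
  then have "f x * (z \<bullet> z) > 0" using bound[of z] by linarith
  then have "f x > 0" using \<open>z \<bullet> z > 0\<close> by (simp add: zero_less_mult_iff)
  moreover have "x \<noteq> 0" using x(1) by auto
  ultimately show ?thesis using eig by blast
qed

section \<open>The spectral gap of a graph Laplacian\<close>

lemma transpose_laplacian:
  assumes "symmetric_graph E"
  shows "transpose (laplacian E) = laplacian E"
  unfolding laplacian_def transpose_def
  using symmetric_graph_edge_iff[OF assms] by (auto simp: vec_eq_iff)

text \<open>Gershgorin estimate: row i of the Laplacian has absolute sum at most
  out-degree plus in-degree of i, so every eigenvalue has modulus at most 2 D.\<close>

lemma lap_eigenvalue_abs_le: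
  fixes E :: "('v::finite \<times> 'v) set"
  assumes "lap_eigenvalue E \<mu>"
  shows "\<bar>\<mu>\<bar> \<le> 2 * real (deg_max E)"
proof -
  let ?L = "laplacian E"
  obtain x where x: "x \<noteq> 0" "?L *v x = \<mu> *\<^sub>R x" using assms lap_eigenvalue_def by auto
  have "Max (range (\<lambda>j. \<bar>x$j\<bar>)) \<in> range (\<lambda>j. \<bar>x$j\<bar>)" by (rule Max_in) auto
  then obtain i where "\<bar>x$i\<bar> = Max (range (\<lambda>j. \<bar>x$j\<bar>))" by (metis rangeE)
  then have i: "\<bar>x$j\<bar> \<le> \<bar>x$i\<bar>" for j by simp
  have xi: "\<bar>x$i\<bar> > 0"
  proof (rule ccontr)
    assume "\<not> ?thesis"
    then have "x$j = 0" for j using i[of j] by simp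
    then show False using x(1) by (simp add: vec_eq_iff)
  qed
  let ?r = "\<lambda>j. (if i = j then real (card (out_nbhd E i)) else 0) + (if (i, j) \<in> E then 1 else 0)"
  have row: "\<bar>?L$i$j\<bar> \<le> ?r j" for j
    unfolding laplacian_def by auto
  have row_sum: "(\<Sum>j\<in>UNIV. ?r j) = real (card (out_nbhd E i)) + real (card (in_nbhd E i))"
    unfolding in_nbhd_def by (simp add: sum.distrib sum.If_cases)
  have "\<bar>\<mu>\<bar> * \<bar>x$i\<bar> = \<bar>(?L *v x)$i\<bar>" using x(2) by (simp add: abs_mult)
  also have "\<dots> = \<bar>\<Sum>j\<in>UNIV. ?L$i$j * x$j\<bar>" by (simp add: matrix_vector_mult_def)
  also have "\<dots> \<le> (\<Sum>j\<in>UNIV. \<bar>?L$i$j\<bar> * \<bar>x$j\<bar>)"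
    by (rule order_trans[OF sum_abs]) (simp add: abs_mult)
  also have "\<dots> \<le> (\<Sum>j\<in>UNIV. ?r j * \<bar>x$i\<bar>)"
    by (intro sum_mono mult_mono row i) auto
  also have "\<dots> = (real (card (out_nbhd E i)) + real (card (in_nbhd E i))) * \<bar>x$i\<bar>"
    by (simp add: sum_distrib_right[symmetric] row_sum)
  also have "\<dots> \<le> 2 * real (deg_max E) * \<bar>x$i\<bar>"
    using card_out_nbhd_le_deg_max[of E i] card_in_nbhd_le_deg_max[of E i] xi
    by (intro mult_right_mono) auto
  finally show ?thesis using xi by simp
qed

text \<open>A node with a neighbour other than itself has positive Laplacian diagonal entry
  (a loop contributes equally to the degree and the adjacency, so it cancels).\<close>

lemma laplacian_diagonal_pos:
  assumes "(u, v) \<in> E" "u \<noteq> v"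
  shows "laplacian E $ v $ v > 0"
proof -
  have "out_nbhd E v - {v} \<noteq> {}" using assms unfolding out_nbhd_def by auto
  then have "card (out_nbhd E v - {v}) \<ge> 1" by (simp add: Suc_le_eq card_gt_0_iff)
  moreover have "card (out_nbhd E v - {v}) \<le> card (out_nbhd E v) - (if (v, v) \<in> E then 1 else 0)"
    by (simp add: card_Diff_singleton_if out_nbhd_def)
  ultimately show ?thesis unfolding laplacian_def by auto
qed

text \<open>For a symmetric graph with a proper edge the set of nonzero eigenvalue moduli is finite
  and nonempty, so the spectral gap is one of them and lies in (0, 2 D].\<close>

lemma spectral_gap_bounds:
  fixes E :: "('v::finite \<times> 'v) set"
  assumes sym: "symmetric_graph E" and edge: "(u, v) \<in> E" "u \<noteq> v"
  shows "0 < spectral_gap E" "spectral_gap E \<le> 2 * real (deg_max E)"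
proof -
  let ?S = "{\<bar>\<mu>\<bar> | \<mu>. lap_eigenvalue E \<mu> \<and> \<mu> \<noteq> 0}"
  have "axis v 1 \<bullet> (laplacian E *v axis v 1) = laplacian E $ v $ v"
    by (simp add: matrix_vector_mult_basis inner_axis' column_def)
  then obtain M where "M > 0" "lap_eigenvalue E M"
    using symmetric_positive_eigenvalue[OF transpose_laplacian[OF sym]]
      laplacian_diagonal_pos[OF edge] unfolding lap_eigenvalue_def by metis
  then have "?S \<noteq> {}" by force
  moreover have "finite ?S"
    using finite_eigenvalues_symmetric[OF transpose_laplacian[OF sym]]
    unfolding lap_eigenvalue_def by (simp add: setcompr_eq_image)
  ultimately have "spectral_gap E \<in> ?S" unfolding spectral_gap_def by (rule Min_in[rotated])
  then obtain \<mu> where "spectral_gap E = \<bar>\<mu>\<bar>" "lap_eigenvalue E \<mu>" "\<mu> \<noteq> 0" by blast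
  then show "0 < spectral_gap E" "spectral_gap E \<le> 2 * real (deg_max E)"
    using lap_eigenvalue_abs_le by auto
qed

lemma connected_graph_proper_edge:
  assumes "connected_graph (E :: ('v::finite \<times> 'v) set)" "CARD('v) \<ge> 2"
  obtains a b where "(a, b) \<in> E" "a \<noteq> b"
proof -
  obtain u v :: 'v where uv: "u \<noteq> v"
    using assms(2) by (metis card_2_iff' card_le_Suc0_iff_eq finite not_less_eq_eq numeral_2_eq_2)
  have "(u, v) \<in> E\<^sup>*" using assms(1) unfolding connected_graph_def by blast
  from this uv have "\<exists>a b. (a, b) \<in> E \<and> a \<noteq> b"
    by (induction rule: rtrancl_induct) auto
  then show ?thesis using that by blast
qed

lemma bound_in_spectral_form:
  fixes W q D N g :: real
  assumes "0 \<le> W" "0 < q" "q < 1" "0 \<le> D" "1 \<le> N" "0 < g" "g \<le> 2 * D"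
  shows "q * D * W / ((1 - q) * N\<^sup>2) \<le> (2 * W + 1) * (q / (1 - q)) * D\<^sup>2 / (N * g)"
proof -
  have Wg: "W * g \<le> (2 * W + 1) * D * N"
  proof -
    have "W * g \<le> W * (2 * D)" using assms by (intro mult_left_mono) auto
    also have "\<dots> \<le> (2 * W + 1) * D" using assms by (simp add: algebra_simps)
    also have "\<dots> \<le> (2 * W + 1) * D * N" using assms by simp
    finally show ?thesis .
  qed
  have "q * D * W / ((1 - q) * N\<^sup>2) = (q / (1 - q)) * D * (W * g) / (N\<^sup>2 * g)"
    using assms by (simp add: field_simps)
  also have "\<dots> \<le> (q / (1 - q)) * D * ((2 * W + 1) * D * N) / (N\<^sup>2 * g)"
    using Wg assms by (intro divide_right_mono mult_left_mono) auto
  also have "\<dots> = (2 * W + 1) * (q / (1 - q)) * D\<^sup>2 / (N * g)"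
    using assms by (simp add: field_simps power2_eq_square)
  finally show ?thesis .
qed

theorem proposition2:
  fixes x0 :: "'v::finite \<Rightarrow> real" and L :: real
  assumes "CARD('v) \<ge> 2"
    and "\<forall>v. 0 \<le> x0 v \<and> x0 v \<le> L"
  shows "\<exists>C > 0. \<forall>(E :: ('v \<times> 'v) set) (q :: real).
           symmetric_graph E \<and> connected_graph E \<and> 0 < q \<and> q < 1 \<longrightarrow>
           (\<exists>beta_inf. expected_beta E q x0 \<longlonglongrightarrow> beta_inf \<and>
              beta_inf \<le> C * (q / (1 - q)) * (real (deg_max E))\<^sup>2
                          / (real CARD('v) * spectral_gap E))"
proof -
  define C where "C = 2 * sq_norm x0 + 1"
  have W: "0 \<le> sq_norm x0" unfolding sq_norm_def by (simp add: sum_nonneg)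
  have "\<exists>beta_inf. expected_beta E q x0 \<longlonglongrightarrow> beta_inf \<and>
          beta_inf \<le> C * (q / (1 - q)) * (real (deg_max E))\<^sup>2 / (real CARD('v) * spectral_gap E)"
    if sym: "symmetric_graph E" and conn: "connected_graph E" and q: "0 < q" "q < 1"
    for E :: "('v \<times> 'v) set" and q :: real
  proof -
    obtain l where lim: "expected_beta E q x0 \<longlonglongrightarrow> l"
        and l: "l \<le> q * real (deg_max E) * sq_norm x0 / ((1 - q) * (real CARD('v))\<^sup>2)"
      using expected_beta_limit[OF sym q] by blast
    obtain a b where edge: "(a, b) \<in> E" "a \<noteq> b"
      using connected_graph_proper_edge[OF conn assms(1)] .
    have "l \<le> C * (q / (1 - q)) * (real (deg_max E))\<^sup>2 / (real CARD('v) * spectral_gap E)"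
      unfolding C_def
      using order_trans[OF l bound_in_spectral_form[OF W q _ _ spectral_gap_bounds[OF sym edge]]]
      by simp
    with lim show ?thesis by blast
  qed
  moreover have "C > 0" unfolding C_def using W by simp
  ultimately show ?thesis by blast
qed

end
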